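(* For all positive integers $n$ and $k$ with $k\le 2^n$, we have $v_2\big(s(2^n+1,k+1)\big)=v_2\big(s(2^n,k)\big)$.
   Context: The (unsigned) Stirling numbers of the first kind $s(n,k)$ are defined by $x(x+1)\cdots(x+n-1)=\sum_{k=0}^n s(n,k)x^k$, with $s(n,k)=0$ for $k>n$. $v_2$ denotes the $2$-adic valuation. *)

theory Defs
  imports "HOL-Combinatorics.Stirling" "HOL-Computational_Algebra.Primes"
begin

end

theory Submission
  imports Defs "HOL-Computational_Algebra.Polynomial" "HOL-Computational_Algebra.Squarefree"
begin

text \<open>
  Write \<open>e\<^sub>n(r)\<close> for the \<open>r\<close>-th elementary symmetric polynomial of \<open>0, 1, \<dots>, 2\<^sup>n - 1\<close>,
  so that \<open>e\<^sub>n(r) = s(2\<^sup>n, 2\<^sup>n - r)\<close>.  Since \<open>s(N + 1, k + 1) = N s(N, k + 1) + s(N, k)\<close>,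
  the theorem follows from \<open>v\<^sub>2(e\<^sub>n(r)) < n + v\<^sub>2(e\<^sub>n(r - 1))\<close> for \<open>0 < r < 2\<^sup>n\<close>, which is
  proved by induction on \<open>n\<close> together with a gap inequality between even indices.

  Splitting the factors \<open>1 + i X\<close> by the parity of \<open>i\<close> gives
  \<open>e\<^sub>n\<^sub>+\<^sub>1(r) = \<Sum>s. 2\<^sup>s e\<^sub>n(s) a\<^sub>n(r - s)\<close>, where \<open>\<Sum>t. a\<^sub>n(t) X\<^sup>t = \<Prod>i<2\<^sup>n. 1 + (2i + 1) X\<close>
  is congruent to \<open>(1 - X\<^sup>2)\<^bsup>2\<^sup>n\<^sup>-\<^sup>1\<^esup>\<close> modulo \<open>2\<^sup>n\<^sup>+\<^sup>1\<close>.  Hence \<open>e\<^sub>n\<^sub>+\<^sub>1(2u)\<close> is congruent to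
  \<open>\<plusminus>(2\<^sup>n\<^sup>-\<^sup>1 choose u)\<close> in the lower half, while in the upper half a single term dominates and
  \<open>v\<^sub>2(e\<^sub>n\<^sub>+\<^sub>1(2\<^sup>n + r)) = r + v\<^sub>2(e\<^sub>n(r))\<close>.  Odd indices are handled by the reflection
  \<open>i \<mapsto> 2\<^sup>n - 1 - i\<close>, which gives \<open>2 e(r + 1) = N (N - r - 1) e(r) - \<dots>\<close> with all omitted terms
  divisible by a higher power of \<open>2\<close>.
\<close>

section \<open>Valuations\<close>

lemma multiplicity_of_nat: "multiplicity (int p) (int x) = multiplicity p x"
proof -
  have "{n. int p ^ n dvd int x} = {n. p ^ n dvd x}"
    by (simp flip: of_nat_power)
  then show ?thesis
    by (simp add: multiplicity_def)
qed

lemma multiplicity_add_dvd: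
  fixes x y p :: "'a::{factorial_semiring, comm_ring_1}"
  assumes "x \<noteq> 0" "p ^ Suc (multiplicity p x) dvd y"
  shows "multiplicity p (x + y) = multiplicity p x"
proof (cases "is_unit p")
  case False
  show ?thesis
  proof (rule multiplicity_eqI)
    have "p ^ multiplicity p x dvd y"
      using assms(2) by (rule dvd_trans[rotated]) (simp add: le_imp_power_dvd)
    then show "p ^ multiplicity p x dvd x + y"
      by (simp add: multiplicity_dvd)
    have "\<not> p ^ Suc (multiplicity p x) dvd x"
      using power_dvd_iff_le_multiplicity[OF assms(1) False, of "Suc (multiplicity p x)"] by simp
    then show "\<not> p ^ Suc (multiplicity p x) dvd x + y"
      using assms(2) by (simp add: dvd_add_left_iff)
  qed
qed (simp add: multiplicity_unit_left)

lemma multiplicity_eq_of_dvd_diff: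
  fixes x c p :: "'a::{factorial_semiring, comm_ring_1}"
  assumes "c \<noteq> 0" "p ^ Suc (multiplicity p c) dvd x - c"
  shows "multiplicity p x = multiplicity p c"
  using multiplicity_add_dvd[OF assms] by simp

lemma multiplicity_sum_dominant:
  fixes f :: "'b \<Rightarrow> 'a::{factorial_semiring, comm_ring_1}"
  assumes "finite S" "s \<in> S" "f s \<noteq> 0"
    and "\<And>t. t \<in> S \<Longrightarrow> t \<noteq> s \<Longrightarrow> p ^ Suc (multiplicity p (f s)) dvd f t"
  shows "multiplicity p (\<Sum>t\<in>S. f t) = multiplicity p (f s)"
proof -
  have "(\<Sum>t\<in>S. f t) = f s + (\<Sum>t\<in>S - {s}. f t)"
    using assms(1,2) by (rule sum.remove)
  moreover have "p ^ Suc (multiplicity p (f s)) dvd (\<Sum>t\<in>S - {s}. f t)"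
    using assms(4) by (intro dvd_sum) auto
  ultimately show ?thesis
    using assms(3) by (simp add: multiplicity_add_dvd)
qed

lemma multiplicity_less_exp: "0 < u \<Longrightarrow> u < p ^ k \<Longrightarrow> multiplicity p u < k"
  for p u :: nat
proof (cases "p \<le> 1")
  case True
  assume "0 < u" "u < p ^ k"
  then have "k \<noteq> 0" by (cases k) auto
  with True show ?thesis
    by (cases "p = 0") (auto simp: multiplicity_unit_left)
next
  case False
  assume "0 < u" "u < p ^ k"
  then have "p ^ multiplicity p u < p ^ k"
    using dvd_imp_le[OF multiplicity_dvd] by (meson le_less_trans)
  with False show ?thesis
    by (simp add: power_less_imp_less_exp)
qed

lemma multiplicity_prime_power_diff:
  fixes p x :: nat
  assumes "prime p" "0 < x" "x < p ^ j"
  shows "multiplicity p (p ^ j - x) = multiplicity p x"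
proof -
  define a where "a = multiplicity p x"
  have "x \<noteq> 0" "\<not> is_unit p"
    using assms by (auto simp: not_prime_unit)
  then obtain w where w: "x = p ^ a * w" "\<not> p dvd w"
    unfolding a_def by (rule multiplicity_decompose')
  have "a < j"
    unfolding a_def by (rule multiplicity_less_exp[OF assms(2,3)])
  have "p ^ a * w < p ^ a * p ^ (j - a)"
    using assms(3) w(1) \<open>a < j\<close> by (simp flip: power_add)
  then have "w < p ^ (j - a)"
    by simp
  have "\<not> p dvd p ^ (j - a) - w"
  proof
    assume "p dvd p ^ (j - a) - w"
    moreover have "p dvd p ^ (j - a)"
      using \<open>a < j\<close> by simp
    ultimately have "p dvd p ^ (j - a) - (p ^ (j - a) - w)"
      by (rule dvd_diff_nat[rotated])
    with \<open>w < p ^ (j - a)\<close> w(2) show False by simp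
  qed
  moreover have "p ^ j - x = p ^ a * (p ^ (j - a) - w)"
    using w \<open>a < j\<close> by (simp add: diff_mult_distrib2 flip: power_add)
  ultimately show ?thesis
    unfolding a_def using assms(1) by (intro multiplicity_decomposeI) auto
qed

lemma prime_not_dvd_binomial_pred:
  fixes p :: nat
  assumes "prime p" "w < p ^ j"
  shows "\<not> p dvd (p ^ j - 1 choose w)"
  using assms(2)
proof (induction w)
  case (Suc w)
  define m where "m = p ^ j - 1"
  have "m - w = p ^ j - Suc w" "m choose w \<noteq> 0" "m choose Suc w \<noteq> 0" "m - w \<noteq> 0"
    using Suc.prems by (simp_all add: m_def)
  have "Suc w * (m choose Suc w) = (m - w) * (m choose w)"
    using binomial_absorption[of w m] binomial_absorb_comp[of m w] by simp
  moreover have "multiplicity p (Suc w * (m choose Suc w)) = multiplicity p (Suc w) + multiplicity p (m choose Suc w)"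
    using assms(1) \<open>m choose Suc w \<noteq> 0\<close> by (intro prime_elem_multiplicity_mult_distrib) auto
  moreover have "multiplicity p ((m - w) * (m choose w)) = multiplicity p (m - w) + multiplicity p (m choose w)"
    using assms(1) \<open>m choose w \<noteq> 0\<close> \<open>m - w \<noteq> 0\<close> by (intro prime_elem_multiplicity_mult_distrib) auto
  moreover have "multiplicity p (m - w) = multiplicity p (Suc w)"
    unfolding \<open>m - w = p ^ j - Suc w\<close> using assms(1) Suc.prems by (intro multiplicity_prime_power_diff) auto
  moreover have "multiplicity p (m choose w) = 0"
    using Suc by (simp add: m_def not_dvd_imp_multiplicity_0)
  ultimately have "multiplicity p (m choose Suc w) = 0"
    by simp
  then show ?case
    using multiplicity_eq_zero_iff[OF \<open>m choose Suc w \<noteq> 0\<close>, of p] prime_gt_1_nat[OF assms(1)]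
    by (simp add: m_def)
qed (use prime_gt_1_nat[OF assms(1)] in simp)

lemma multiplicity_binomial_prime_power:
  fixes p u :: nat
  assumes "prime p" "0 < u" "u \<le> p ^ j"
  shows "multiplicity p (p ^ j choose u) + multiplicity p u = j"
proof -
  define C where "C = p ^ j - 1 choose (u - 1)"
  have "u * (p ^ j choose u) = p ^ j * C"
    using times_binomial_minus1_eq[of u "p ^ j"] assms by (simp add: C_def)
  moreover have "C \<noteq> 0"
    using assms by (simp add: C_def)
  moreover have "\<not> p dvd C"
    unfolding C_def using assms by (intro prime_not_dvd_binomial_pred) auto
  moreover have "multiplicity p (u * (p ^ j choose u)) = multiplicity p u + multiplicity p (p ^ j choose u)"
    using assms by (intro prime_elem_multiplicity_mult_distrib) auto
  moreover have "multiplicity p (p ^ j * C) = j + multiplicity p C"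
    using assms \<open>C \<noteq> 0\<close> by (subst prime_elem_multiplicity_mult_distrib) auto
  ultimately show ?thesis
    by (simp add: not_dvd_imp_multiplicity_0)
qed

abbreviation v2 :: "int \<Rightarrow> nat" where
  "v2 \<equiv> multiplicity 2"

lemma v2_of_nat: "v2 (int x) = multiplicity 2 x"
  using multiplicity_of_nat[of 2 x] by simp

lemma v2_mult: "x \<noteq> 0 \<Longrightarrow> y \<noteq> 0 \<Longrightarrow> v2 (x * y) = v2 x + v2 y"
  by (rule prime_elem_multiplicity_mult_distrib) auto

lemma v2_two_power [simp]: "v2 (2 ^ n) = n"
  by (rule multiplicity_same_power) auto

lemma v2_odd: "odd x \<Longrightarrow> v2 x = 0"
  by (rule not_dvd_imp_multiplicity_0)

lemma v2_less_exp: "0 < u \<Longrightarrow> u < 2 ^ k \<Longrightarrow> v2 (int u) < k"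
  unfolding v2_of_nat by (rule multiplicity_less_exp)

lemma v2_less_self: "0 < u \<Longrightarrow> v2 (int u) < u"
  by (rule v2_less_exp) (simp_all add: less_exp)

lemma v2_two_power_diff: "0 < x \<Longrightarrow> x < 2 ^ j \<Longrightarrow> v2 (int (2 ^ j - x)) = v2 (int x)"
  unfolding v2_of_nat by (rule multiplicity_prime_power_diff) auto

lemma v2_binomial_two_power: "0 < u \<Longrightarrow> u \<le> 2 ^ k \<Longrightarrow> v2 (int (2 ^ k choose u)) + v2 (int u) = k"
  unfolding v2_of_nat by (rule multiplicity_binomial_prime_power) auto

lemma dvd_prod_diff:
  fixes f g :: "'b \<Rightarrow> 'a::comm_ring_1"
  assumes "\<And>j. j \<in> S \<Longrightarrow> m dvd f j - g j"
  shows "m dvd prod f S - prod g S"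
  using assms
proof (induction S rule: infinite_finite_induct)
  case (insert x F)
  have "prod f (insert x F) - prod g (insert x F) = (f x - g x) * prod f F + g x * (prod f F - prod g F)"
    using insert.hyps by (simp add: algebra_simps)
  then show ?case
    using insert by simp
qed simp_all

section \<open>Products of linear factors\<close>

definition lin_prod :: "(nat \<Rightarrow> 'a::comm_ring_1) \<Rightarrow> nat \<Rightarrow> 'a poly" where
  "lin_prod c m = (\<Prod>i<m. [:1, c i:])"

lemma lin_prod_0 [simp]: "lin_prod c 0 = 1"
  by (simp add: lin_prod_def)

lemma lin_prod_Suc: "lin_prod c (Suc m) = lin_prod c m * [:1, c m:]"
  by (simp add: lin_prod_def)

lemma coeff_mult_linear_Suc:
  "coeff (p * [:1, c:]) (Suc t) = coeff p (Suc t) + c * coeff p t"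
  for p :: "'a::comm_ring_1 poly"
  by (simp add: mult_pCons_right)

lemma coeff_lin_prod_0 [simp]: "coeff (lin_prod c m) 0 = 1"
  by (induction m) (simp_all add: lin_prod_Suc mult_pCons_right)

lemma coeff_lin_prod_Suc_Suc:
  "coeff (lin_prod c (Suc m)) (Suc t) = coeff (lin_prod c m) (Suc t) + c m * coeff (lin_prod c m) t"
  by (simp add: lin_prod_Suc coeff_mult_linear_Suc)

lemma coeff_lin_prod_eq_0: "m < t \<Longrightarrow> coeff (lin_prod c m) t = 0"
proof (induction m arbitrary: t)
  case 0
  then show ?case by (cases t) auto
next
  case (Suc m)
  then obtain t' where "t = Suc t'" by (cases t) auto
  with Suc show ?case by (simp add: coeff_lin_prod_Suc_Suc)
qed

lemma coeff_lin_prod_top: "coeff (lin_prod c m) m = (\<Prod>i<m. c i)"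
  by (induction m) (simp_all add: coeff_lin_prod_Suc_Suc coeff_lin_prod_eq_0)

lemma coeff_lin_prod_scale: "coeff (lin_prod (\<lambda>i. z * c i) m) t = z ^ t * coeff (lin_prod c m) t"
proof (induction m arbitrary: t)
  case 0
  then show ?case by (cases t) auto
next
  case (Suc m)
  then show ?case by (cases t) (simp_all add: coeff_lin_prod_Suc_Suc algebra_simps)
qed

lemma lin_prod_add: "lin_prod c (a + b) = lin_prod c a * lin_prod (\<lambda>i. c (a + i)) b"
  by (induction b) (simp_all add: lin_prod_Suc mult.assoc del: mult_pCons_right)

lemma lin_prod_rev: "lin_prod c m = lin_prod (\<lambda>i. c (m - Suc i)) m"
  unfolding lin_prod_def by (rule prod.nat_diff_reindex[symmetric])

lemma lin_prod_even_odd: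
  "lin_prod c (2 * m) = lin_prod (\<lambda>i. c (2 * i)) m * lin_prod (\<lambda>i. c (2 * i + 1)) m"
proof (induction m)
  case (Suc m)
  have double_Suc: "2 * Suc m = Suc (Suc (2 * m))"
    by simp
  have "lin_prod c (2 * Suc m) = lin_prod c (2 * m) * [:1, c (2 * m):] * [:1, c (2 * m + 1):]"
    unfolding double_Suc lin_prod_Suc by (simp only: Suc_eq_plus1)
  also have "\<dots> = (lin_prod (\<lambda>i. c (2 * i)) m * [:1, c (2 * m):]) *
      (lin_prod (\<lambda>i. c (2 * i + 1)) m * [:1, c (2 * m + 1):])"
    unfolding Suc.IH by (simp only: mult_ac)
  finally show ?case
    by (simp only: lin_prod_Suc)
qed simp

lemma lin_prod_homogeneous:
  fixes a b :: "'a::comm_ring_1" and c :: "nat \<Rightarrow> int"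
  shows "(\<Prod>i<m. a + of_int (c i) * b) = (\<Sum>t\<le>m. of_int (coeff (lin_prod c m) t) * a ^ (m - t) * b ^ t)"
proof (induction m)
  case 0
  then show ?case by simp
next
  case (Suc m)
  define e where "e t = (of_int (coeff (lin_prod c m) t) :: 'a)" for t
  have "(\<Prod>i<Suc m. a + of_int (c i) * b) = (\<Sum>t\<le>m. e t * a ^ (m - t) * b ^ t) * (a + of_int (c m) * b)"
    using Suc by (simp add: e_def)
  also have "\<dots> = (\<Sum>t\<le>m. e t * a ^ (Suc m - t) * b ^ t) + (\<Sum>t\<le>m. of_int (c m) * e t * a ^ (m - t) * b ^ Suc t)"
    by (simp add: algebra_simps sum_distrib_left sum_distrib_right sum.distrib Suc_diff_le)
  also have "(\<Sum>t\<le>m. e t * a ^ (Suc m - t) * b ^ t) = (\<Sum>t\<le>Suc m. e t * a ^ (Suc m - t) * b ^ t)"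
    by (simp add: e_def coeff_lin_prod_eq_0)
  also have "\<dots> = e 0 * a ^ Suc m + (\<Sum>t\<le>m. e (Suc t) * a ^ (m - t) * b ^ Suc t)"
    by (subst sum.atMost_Suc_shift) simp
  finally show ?case
    by (subst sum.atMost_Suc_shift) (simp add: e_def coeff_lin_prod_Suc_Suc sum.distrib algebra_simps)
qed

lemma coeff_one_linear_power: "coeff ([:1, z:] ^ n) i = of_nat (n choose i) * z ^ i"
  for z :: "'a::comm_ring_1"
proof (cases "i \<le> n")
  case True
  then show ?thesis by (simp add: coeff_linear_poly_power)
next
  case False
  have "degree ([:1, z:] ^ n) \<le> degree [:1, z:] * n" by (rule degree_power_le)
  also have "\<dots> \<le> n" by simp
  finally show ?thesis using False by (simp add: coeff_eq_0 binomial_eq_0)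
qed

lemma const_poly_dvd_add_alternating:
  fixes p q :: "'a::idom poly"
  assumes "[:m:] dvd p" "\<And>t. coeff q t = (-1) ^ t * coeff p t"
  shows "[:2 * m:] dvd p + q"
  unfolding const_poly_dvd_iff
proof
  fix t
  have "m dvd coeff p t"
    using assms(1) by (simp add: const_poly_dvd_iff)
  then show "2 * m dvd coeff (p + q) t"
    using assms(2) by (cases "even t") (simp_all add: mult_dvd_mono)
qed

lemma coeff_one_minus_square_power:
  "coeff ([:1, 0, -1:] ^ h) t = (if even t then (-1) ^ (t div 2) * int (h choose (t div 2)) else 0)"
proof (induction h arbitrary: t)
  case 0
  then show ?case by (cases t) (auto simp: coeff_1)
next
  case (Suc h)
  have rec: "coeff ([:1, 0, -1:] ^ Suc h) t
      = coeff ([:1, 0, -1:] ^ h) t - (if t < 2 then 0 else coeff ([:1, 0, -1:] ^ h :: int poly) (t - 2))"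
    by (auto simp: mult.commute[of "[:1, 0, -1:]"] mult_pCons_right coeff_pCons split: nat.split)
  show ?case
  proof (cases "t < 2")
    case True
    then show ?thesis by (simp add: rec Suc.IH) (cases t; simp)
  next
    case False
    then obtain t' where t: "t = Suc (Suc t')"
      by (metis add_2_eq_Suc le_add_diff_inverse not_less)
    show ?thesis
      using Suc.IH by (cases "even t'") (auto simp: rec t algebra_simps elim!: evenE)
  qed
qed

lemma coeff_one_minus_square_power_odd: "odd t \<Longrightarrow> coeff ([:1, 0, -1:] ^ h :: int poly) t = 0"
  by (simp add: coeff_one_minus_square_power)

section \<open>The Stirling polynomial\<close>

abbreviation stirling_poly :: "nat \<Rightarrow> int poly" where
  "stirling_poly N \<equiv> lin_prod int N"

lemma coeff_stirling_poly: "r \<le> N \<Longrightarrow> coeff (stirling_poly N) r = int (stirling N (N - r))"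
proof (induction N arbitrary: r)
  case 0
  then show ?case by simp
next
  case (Suc N)
  show ?case
  proof (cases r)
    case (Suc t)
    have "int N * int (stirling N 0) = 0" by (cases N) auto
    moreover have "Suc N - Suc t = Suc (N - Suc t)" "N - t = Suc (N - Suc t)" if "t < N"
      using that by simp_all
    ultimately show ?thesis
      using Suc Suc.prems Suc.IH
      by (cases "t = N") (simp_all add: coeff_lin_prod_Suc_Suc coeff_lin_prod_eq_0)
  qed simp
qed

lemma stirling_pos: "0 < k \<Longrightarrow> k \<le> n \<Longrightarrow> 0 < stirling n k"
proof (induction n arbitrary: k)
  case (Suc n)
  then obtain k' where k: "k = Suc k'" by (cases k) auto
  show ?case
  proof (cases k')
    case 0
    then show ?thesis using k by (simp del: stirling.simps add: stirling_Suc_n_1)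
  next
    case (Suc k'')
    then show ?thesis using k Suc.prems Suc.IH[of k'] by simp
  qed
qed simp

lemma coeff_stirling_poly_pos: "r < N \<Longrightarrow> 0 < coeff (stirling_poly N) r"
  using coeff_stirling_poly[of r N] stirling_pos[of "N - r" N] by simp

lemma coeff_stirling_poly_eq_0: "0 < N \<Longrightarrow> N \<le> r \<Longrightarrow> coeff (stirling_poly N) r = 0"
  by (cases "r = N") (auto simp: coeff_lin_prod_top coeff_lin_prod_eq_0)

text \<open>Reversing the order of the factors \<open>1 + i X\<close> turns \<open>\<Prod>i<N. (1 - N X) + i X\<close>
  into \<open>\<Prod>j=1..N. 1 - j X\<close>.\<close>

lemma stirling_poly_reflection:
  "(\<Prod>i<N. [:1, - int N:] + [:int i:] * monom 1 1) = [:1, - int N:] * lin_prod (\<lambda>i. - int i) N"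
proof -
  have "(\<Prod>i<N. [:1, - int N:] + [:int i:] * monom 1 1) = (\<Prod>i<N. [:1, int i - int N:])"
    by (intro prod.cong) (simp_all add: monom_altdef)
  also have "\<dots> = (\<Prod>i<N. [:1, int (N - Suc i) - int N:])"
    by (rule prod.nat_diff_reindex[symmetric])
  also have "\<dots> = (\<Prod>i<N. [:1, - int (Suc i):])"
    by (intro prod.cong) (simp_all add: of_nat_diff)
  also have "\<dots> = (\<Prod>i<Suc N. [:1, - int i:])"
    by (subst prod.lessThan_Suc_shift) simp
  finally show ?thesis
    by (simp add: lin_prod_def mult.commute)
qed

lemma stirling_poly_reflection_coeff:
  fixes N r :: nat
  defines "e \<equiv> coeff (stirling_poly N)"
  shows "(-1) ^ Suc r * e (Suc r) - int N * (-1) ^ r * e r =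
    (\<Sum>t\<le>N. e t * (if Suc r < t then 0 else int (N - t choose (Suc r - t)) * (- int N) ^ (Suc r - t)))"
proof -
  have expand: "[:1, - int N:] * lin_prod (\<lambda>i. - int i) N =
      (\<Sum>t\<le>N. [:e t:] * (monom 1 t * [:1, - int N:] ^ (N - t)))"
    using lin_prod_homogeneous[of "[:1, - int N:]" int "monom 1 1" N]
    unfolding of_int_poly of_int_of_nat_eq of_nat_id stirling_poly_reflection
    by (simp add: monom_power e_def mult_ac)
  have "coeff (lin_prod (\<lambda>i. - int i) N) t = (-1) ^ t * e t" for t
    using coeff_lin_prod_scale[of "-1" int N t] by (simp add: e_def)
  then have "coeff ([:1, - int N:] * lin_prod (\<lambda>i. - int i) N) (Suc r) =
      (-1) ^ Suc r * e (Suc r) - int N * (-1) ^ r * e r"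
    by (simp add: mult.commute[of "[:1, - int N:]"] coeff_mult_linear_Suc del: mult_pCons_right)
  moreover have "coeff (\<Sum>t\<le>N. [:e t:] * (monom 1 t * [:1, - int N:] ^ (N - t))) (Suc r) =
      (\<Sum>t\<le>N. e t * (if Suc r < t then 0 else int (N - t choose (Suc r - t)) * (- int N) ^ (Suc r - t)))"
    unfolding coeff_sum by (intro sum.cong) (simp_all add: coeff_monom_mult coeff_one_linear_power)
  ultimately show ?thesis
    by (simp only: expand)
qed

lemma stirling_poly_reflection_even:
  fixes N r :: nat
  defines "e \<equiv> coeff (stirling_poly N)"
  assumes "even r" "Suc r < N"
  shows "2 * e (Suc r) = int N * (int N - int r - 1) * e r
     - (\<Sum>t<r. e t * int (N - t choose (Suc r - t)) * (- int N) ^ (Suc r - t))"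
proof -
  define X where "X t = e t * int (N - t choose (Suc r - t)) * (- int N) ^ (Suc r - t)" for t
  have "(\<Sum>t\<le>N. e t * (if Suc r < t then 0 else int (N - t choose (Suc r - t)) * (- int N) ^ (Suc r - t)))
      = (\<Sum>t\<le>Suc r. X t)"
    using assms(3) by (subst sum.mono_neutral_right[of "{..N}" "{..Suc r}"]) (auto simp: X_def mult.assoc)
  also have "\<dots> = e (Suc r) - int N * int (N - r) * e r + (\<Sum>t<r. X t)"
    by (simp add: X_def lessThan_Suc_atMost[symmetric])
  finally have "- e (Suc r) - int N * e r = e (Suc r) - int N * (int N - int r) * e r + (\<Sum>t<r. X t)"
    using stirling_poly_reflection_coeff[where N=N and r=r] assms by (simp add: e_def of_nat_diff)
  then show ?thesis
    by (simp add: X_def algebra_simps)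
qed

section \<open>The product of the odd factors modulo powers of two\<close>

definition odd_lin_prod :: "nat \<Rightarrow> int poly" where
  "odd_lin_prod m = lin_prod (\<lambda>i. 2 * int i + 1) m"

lemma coeff_odd_lin_prod_eq_0: "m < t \<Longrightarrow> coeff (odd_lin_prod m) t = 0"
  unfolding odd_lin_prod_def by (rule coeff_lin_prod_eq_0)

lemma odd_coeff_odd_lin_prod_top: "odd (coeff (odd_lin_prod m) m)"
  unfolding odd_lin_prod_def coeff_lin_prod_top by (induction m) auto

lemma coeff_stirling_poly_double:
  "coeff (stirling_poly (2 * m)) r = (\<Sum>s\<le>r. 2 ^ s * coeff (stirling_poly m) s * coeff (odd_lin_prod m) (r - s))"
proof -
  have "stirling_poly (2 * m) = lin_prod (\<lambda>i. 2 * int i) m * odd_lin_prod m"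
    unfolding odd_lin_prod_def lin_prod_even_odd by (simp add: add.commute)
  then show ?thesis
    by (simp add: coeff_mult coeff_lin_prod_scale mult.assoc)
qed

lemma odd_lin_prod_double_cong:
  "[:4 * int M:] dvd odd_lin_prod (2 * M) - odd_lin_prod M * lin_prod (\<lambda>i. - (2 * int i + 1)) M"
proof -
  define f where "f i = [:1, 2 * int i + 1:]" for i
  define g where "g i = [:1, 2 * int (M + (M - Suc i)) + 1:]" for i
  define h where "h i = [:1, - (2 * int i + 1):]" for i
  have "odd_lin_prod (2 * M) = odd_lin_prod M * lin_prod (\<lambda>i. 2 * int (M + (M - Suc i)) + 1) M"
    unfolding odd_lin_prod_def mult_2 lin_prod_add by (subst lin_prod_rev) simp
  then have "odd_lin_prod (2 * M) = (\<Prod>i<M. f i * g i)"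
    by (simp only: odd_lin_prod_def lin_prod_def f_def g_def prod.distrib)
  moreover have "odd_lin_prod M * lin_prod (\<lambda>i. - (2 * int i + 1)) M = (\<Prod>i<M. f i * h i)"
    by (simp only: odd_lin_prod_def lin_prod_def f_def h_def prod.distrib)
  moreover have "[:4 * int M:] dvd f i * g i - f i * h i" if "i < M" for i
  proof -
    have "g i - h i = [:4 * int M:] * [:0, 1:]"
      using that by (simp add: g_def h_def of_nat_diff)
    then have "f i * g i - f i * h i = [:4 * int M:] * (f i * [:0, 1:])"
      by (simp only: mult.left_commute flip: right_diff_distrib)
    then show ?thesis
      by (simp only: dvd_triv_left)
  qed
  ultimately show ?thesis
    using dvd_prod_diff[where S="{..<M}" and m="[:4 * int M:]"] by simp
qed

lemma dvd_diff_add_diff: "m dvd a - b \<Longrightarrow> m dvd b - c \<Longrightarrow> m dvd a - c"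
  for a b c m :: "'a::comm_ring_1"
  using dvd_add[of m "a - b" "b - c"] by simp

lemma const_poly_dvd_mult_reflect_diff:
  fixes p q Q :: "'a::idom poly"
  assumes "[:m:] dvd p - Q" "2 * m dvd m * m"
    and "\<And>t. coeff q t = (-1) ^ t * coeff p t" "\<And>t. odd t \<Longrightarrow> coeff Q t = 0"
  shows "[:2 * m:] dvd p * q - Q * Q"
proof -
  have alternating: "coeff (q - Q) t = (-1) ^ t * coeff (p - Q) t" for t
    using assms(3,4) by (cases "even t") simp_all
  then have "[:m:] dvd q - Q"
    using assms(1) by (simp add: const_poly_dvd_iff)
  moreover have "[:2 * m:] dvd (p - Q) + (q - Q)"
    using assms(1) alternating by (rule const_poly_dvd_add_alternating)
  moreover have "[:2 * m:] dvd (p - Q) * (q - Q)"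
  proof -
    have "[:m:] * [:m:] dvd (p - Q) * (q - Q)"
      using assms(1) \<open>[:m:] dvd q - Q\<close> by (rule mult_dvd_mono)
    moreover have "[:2 * m:] dvd [:m:] * [:m:]"
      using assms(2) by simp
    ultimately show ?thesis
      by (rule dvd_trans[rotated])
  qed
  moreover have "p * q - Q * Q = (p - Q) * (q - Q) + Q * ((p - Q) + (q - Q))"
    by (simp add: algebra_simps)
  ultimately show ?thesis
    by (simp add: dvd_add)
qed

lemma odd_lin_prod_cong: "[:2 ^ (k + 2):] dvd odd_lin_prod (2 ^ (k + 1)) - [:1, 0, -1:] ^ 2 ^ k"
proof (induction k)
  case 0
  have "odd_lin_prod 2 - [:1, 0, -1:] = [:4:] * [:0, 1, 1:]"
    by (simp add: odd_lin_prod_def numeral_2_eq_2 lin_prod_Suc)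
  then show ?case by (simp add: const_poly_dvd_iff coeff_pCons split: nat.split)
next
  case (Suc k)
  define M :: nat where "M = 2 ^ (k + 1)"
  define B where "B = lin_prod (\<lambda>i. - (2 * int i + 1)) M"
  have "[:2 * 2 ^ (k + 2):] dvd odd_lin_prod M * B - [:1, 0, -1:] ^ 2 ^ k * [:1, 0, -1:] ^ 2 ^ k"
  proof (rule const_poly_dvd_mult_reflect_diff)
    show "[:2 ^ (k + 2):] dvd odd_lin_prod M - [:1, 0, -1:] ^ 2 ^ k"
      using Suc.IH by (simp add: M_def)
    show "2 * 2 ^ (k + 2) dvd 2 ^ (k + 2) * (2 ^ (k + 2) :: int)"
      by (simp add: power_add)
    show "coeff B t = (-1) ^ t * coeff (odd_lin_prod M) t" for t
      using coeff_lin_prod_scale[of "-1" "\<lambda>i. 2 * int i + 1" M t] by (simp add: B_def odd_lin_prod_def)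
  qed (rule coeff_one_minus_square_power_odd)
  moreover have "[:2 * 2 ^ (k + 2):] dvd odd_lin_prod (2 * M) - odd_lin_prod M * B"
    using odd_lin_prod_double_cong[of M] by (simp add: B_def M_def power_add)
  ultimately have "[:2 * 2 ^ (k + 2):] dvd odd_lin_prod (2 * M) - [:1, 0, -1:] ^ 2 ^ k * [:1, 0, -1:] ^ 2 ^ k"
    by (rule dvd_diff_add_diff[rotated])
  moreover have "odd_lin_prod (2 * M) = odd_lin_prod (2 ^ (Suc k + 1))"
    by (simp add: M_def)
  moreover have "[:1, 0, -1:] ^ 2 ^ k * [:1, 0, -1:] ^ 2 ^ k = ([:1, 0, -1:] ^ 2 ^ Suc k :: int poly)"
    unfolding power_add[symmetric] by (simp add: mult_2)
  moreover have "2 * 2 ^ (k + 2) = (2 ^ (Suc k + 2) :: int)"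
    by simp
  ultimately show ?case
    by (simp only:)
qed

lemma coeff_odd_lin_prod_cong:
  "2 ^ (k + 2) dvd coeff (odd_lin_prod (2 ^ (k + 1))) t - coeff ([:1, 0, -1:] ^ 2 ^ k) t"
  using odd_lin_prod_cong[of k] unfolding const_poly_dvd_iff by simp

lemma coeff_odd_lin_prod_even_cong:
  "2 ^ (k + 2) dvd coeff (odd_lin_prod (2 ^ (k + 1))) (2 * u) - (-1) ^ u * int (2 ^ k choose u)"
  using coeff_odd_lin_prod_cong[of k "2 * u"] by (simp add: coeff_one_minus_square_power)

lemma coeff_odd_lin_prod_odd_dvd: "odd t \<Longrightarrow> 2 ^ (k + 2) dvd coeff (odd_lin_prod (2 ^ (k + 1))) t"
  using coeff_odd_lin_prod_cong[of k t] by (simp add: coeff_one_minus_square_power_odd)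

lemma v2_of_cong_binomial:
  assumes "0 < u" "u \<le> 2 ^ k" "2 ^ (k + 1) dvd x - (-1) ^ u * int (2 ^ k choose u)"
  shows "v2 x = k - v2 (int u)"
proof -
  define c where "c = (-1) ^ u * int (2 ^ k choose u)"
  have "v2 c = v2 (int (2 ^ k choose u))"
    by (cases "even u") (simp_all add: c_def)
  also have "\<dots> = k - v2 (int u)"
    using v2_binomial_two_power[OF assms(1,2)] by simp
  finally have "v2 c = k - v2 (int u)" .
  moreover have "c \<noteq> 0"
    using assms(2) by (simp add: c_def)
  moreover have "2 ^ Suc (v2 c) dvd x - c"
    using assms(3) \<open>v2 c = k - v2 (int u)\<close> unfolding c_def
    by (elim power_le_dvd) simp
  ultimately show ?thesis
    using multiplicity_eq_of_dvd_diff by metis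
qed

lemma v2_coeff_odd_lin_prod_even:
  "0 < u \<Longrightarrow> u \<le> 2 ^ k \<Longrightarrow> v2 (coeff (odd_lin_prod (2 ^ (k + 1))) (2 * u)) = k - v2 (int u)"
  using coeff_odd_lin_prod_even_cong[of k u]
  by (intro v2_of_cong_binomial) (auto elim: power_le_dvd)

section \<open>Elementary symmetric values at \<open>0, \<dots>, 2\<^sup>n - 1\<close>\<close>

text \<open>\<open>esym n r\<close> is the \<open>e\<^sub>n(r)\<close> of the introduction.\<close>

definition esym :: "nat \<Rightarrow> nat \<Rightarrow> int" where
  "esym n r = coeff (stirling_poly (2 ^ n)) r"

lemma esym_0 [simp]: "esym n 0 = 1"
  by (simp add: esym_def)

lemma esym_nonzero: "r < 2 ^ n \<Longrightarrow> esym n r \<noteq> 0"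
  unfolding esym_def using coeff_stirling_poly_pos by (metis less_irrefl)

lemma esym_eq_0: "2 ^ n \<le> r \<Longrightarrow> esym n r = 0"
  unfolding esym_def by (rule coeff_stirling_poly_eq_0) simp_all

lemma esym_eq_stirling: "r \<le> 2 ^ n \<Longrightarrow> esym n r = int (stirling (2 ^ n) (2 ^ n - r))"
  unfolding esym_def by (rule coeff_stirling_poly)

lemma esym_Suc:
  "esym (Suc n) r = (\<Sum>s\<le>r. 2 ^ s * esym n s * coeff (odd_lin_prod (2 ^ n)) (r - s))"
  unfolding esym_def using coeff_stirling_poly_double[of "2 ^ n" r] by simp

lemma esym_even_scaled_dvd:
  assumes IH: "\<And>\<sigma>. 0 < \<sigma> \<Longrightarrow> \<sigma> \<le> 2 ^ (k - 1) \<Longrightarrow> 2 ^ (k - 1 - v2 (int \<sigma>)) dvd esym (k + 1) (2 * \<sigma>)"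
    and "0 < \<sigma>"
  shows "2 ^ (k + 1) dvd 2 ^ (2 * \<sigma>) * esym (k + 1) (2 * \<sigma>)"
proof (cases "\<sigma> \<le> 2 ^ (k - 1)")
  case True
  have "v2 (int \<sigma>) < \<sigma>"
    using \<open>0 < \<sigma>\<close> by (rule v2_less_self)
  then have "k + 1 \<le> 2 * \<sigma> + (k - 1 - v2 (int \<sigma>))"
    by linarith
  moreover have "2 ^ (2 * \<sigma> + (k - 1 - v2 (int \<sigma>))) dvd 2 ^ (2 * \<sigma>) * esym (k + 1) (2 * \<sigma>)"
    unfolding power_add using IH[OF \<open>0 < \<sigma>\<close> True] by (rule mult_dvd_mono[OF dvd_refl])
  ultimately show ?thesis
    by (rule power_le_dvd[rotated])
next
  case False
  have "k + 1 \<le> 2 * \<sigma>"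
  proof (cases k)
    case (Suc k')
    have "Suc k' < 2 ^ Suc k'"
      by (rule less_exp)
    with False Suc show ?thesis by simp
  qed (use \<open>0 < \<sigma>\<close> in simp)
  then show ?thesis
    by (rule dvd_mult2[OF le_imp_power_dvd])
qed

text \<open>Modulo \<open>2\<^sup>k\<^sup>+\<^sup>1\<close> only the term \<open>s = 0\<close> of the convolution survives: odd \<open>s\<close> meet an odd
  coefficient of \<open>odd_lin_prod\<close>, and even \<open>s = 2\<sigma>\<close> are controlled by the previous level.\<close>

lemma esym_lower_half_cong:
  assumes IH: "\<And>\<sigma>. 0 < \<sigma> \<Longrightarrow> \<sigma> \<le> 2 ^ (k - 1) \<Longrightarrow> 2 ^ (k - 1 - v2 (int \<sigma>)) dvd esym (k + 1) (2 * \<sigma>)"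
  shows "2 ^ (k + 1) dvd esym (k + 2) (2 * u) - (-1) ^ u * int (2 ^ k choose u)"
proof -
  define T where "T s = 2 ^ s * esym (k + 1) s * coeff (odd_lin_prod (2 ^ (k + 1))) (2 * u - s)" for s
  have "esym (k + 2) (2 * u) = (\<Sum>s\<le>2 * u. T s)"
    using esym_Suc[of "k + 1" "2 * u"] by (simp add: T_def)
  also have "\<dots> = T 0 + (\<Sum>s\<in>{..2 * u} - {0}. T s)"
    by (rule sum.remove) auto
  finally have diff: "esym (k + 2) (2 * u) - T 0 = (\<Sum>s\<in>{..2 * u} - {0}. T s)"
    by simp
  have "2 ^ (k + 1) dvd T s" if "0 < s" "s \<le> 2 * u" for s
  proof (cases "even s")
    case True
    then obtain \<sigma> where "s = 2 * \<sigma>" "0 < \<sigma>"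
      using \<open>0 < s\<close> by (auto elim!: evenE)
    then show ?thesis
      using esym_even_scaled_dvd[OF IH] by (simp add: T_def)
  next
    case False
    then have "2 ^ (k + 2) dvd coeff (odd_lin_prod (2 ^ (k + 1))) (2 * u - s)"
      using that by (intro coeff_odd_lin_prod_odd_dvd) auto
    then have "2 ^ (k + 1) dvd coeff (odd_lin_prod (2 ^ (k + 1))) (2 * u - s)"
      by (rule power_le_dvd) simp
    then show ?thesis
      unfolding T_def by (rule dvd_mult)
  qed
  then have "2 ^ (k + 1) dvd esym (k + 2) (2 * u) - T 0"
    unfolding diff by (intro dvd_sum) auto
  moreover have "2 ^ (k + 1) dvd T 0 - (-1) ^ u * int (2 ^ k choose u)"
    using power_le_dvd[OF coeff_odd_lin_prod_even_cong[of k u], of "k + 1"] by (simp add: T_def)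
  ultimately have "2 ^ (k + 1) dvd (esym (k + 2) (2 * u) - T 0) + (T 0 - (-1) ^ u * int (2 ^ k choose u))"
    by (rule dvd_add)
  then show ?thesis
    by simp
qed

lemma v2_esym_lower_half: "0 < u \<Longrightarrow> u \<le> 2 ^ k \<Longrightarrow> v2 (esym (k + 2) (2 * u)) = k - v2 (int u)"
proof (induction k arbitrary: u)
  case 0
  then show ?case
    using esym_lower_half_cong[of 0 u] by (intro v2_of_cong_binomial) simp_all
next
  case (Suc k)
  have "2 ^ (k - v2 (int \<sigma>)) dvd esym (k + 2) (2 * \<sigma>)" if "0 < \<sigma>" "\<sigma> \<le> 2 ^ k" for \<sigma>
    using Suc.IH[OF that] multiplicity_dvd[of 2 "esym (k + 2) (2 * \<sigma>)"] by simp
  then show ?case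
    using esym_lower_half_cong[of "Suc k" u] Suc.prems by (intro v2_of_cong_binomial) simp_all
qed

lemma v2_esym_lower_half_less:
  assumes "0 < n" "even r" "r \<le> 2 ^ n"
  shows "v2 (esym (Suc n) r) < n"
proof (cases "r = 0")
  case False
  obtain u where "r = 2 * u" "0 < u"
    using assms(2) False by (auto elim!: evenE)
  moreover obtain k where "n = Suc k"
    using assms(1) gr0_implies_Suc by blast
  ultimately show ?thesis
    using v2_esym_lower_half[of u k] assms(3) by simp
qed (use assms(1) in simp)

section \<open>Valuation invariants\<close>

definition esym_succ_bound :: "nat \<Rightarrow> bool" where
  "esym_succ_bound n \<longleftrightarrow> (\<forall>r. 0 < r \<longrightarrow> r < 2 ^ n \<longrightarrow> v2 (esym n r) < n + v2 (esym n (r - 1)))"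

definition esym_odd_succ_eq :: "nat \<Rightarrow> bool" where
  "esym_odd_succ_eq n \<longleftrightarrow> (\<forall>r. odd r \<longrightarrow> r < 2 ^ n \<longrightarrow> v2 (esym n r) + 1 = n + v2 (esym n (r - 1)))"

definition esym_even_gap :: "nat \<Rightarrow> bool" where
  "esym_even_gap n \<longleftrightarrow>
    (\<forall>r s. even r \<longrightarrow> even s \<longrightarrow> r < s \<longrightarrow> s < 2 ^ n \<longrightarrow> v2 (esym n r) + 2 \<le> n + v2 (esym n s))"

lemma v2_esym_le_odd:
  assumes "0 < n" "esym_even_gap n" "esym_odd_succ_eq n" "even r" "odd s" "r < s" "s < 2 ^ n"
  shows "v2 (esym n r) \<le> v2 (esym n s)"
proof -
  have "v2 (esym n s) + 1 = n + v2 (esym n (s - 1))"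
    using assms(3,5,7) by (simp add: esym_odd_succ_eq_def)
  moreover have "v2 (esym n r) + 2 \<le> n + v2 (esym n (s - 1))" if "r \<noteq> s - 1"
    using assms that by (simp add: esym_even_gap_def)
  ultimately show ?thesis
    using assms(1) by (cases "r = s - 1") auto
qed

lemma esym_upper_half_even_term_dvd:
  assumes "0 < n" "esym_even_gap n" "even r" "even s" "r < s" "s < 2 ^ n"
  shows "2 ^ (r + v2 (esym n r) + 1) dvd 2 ^ s * esym n s * coeff (odd_lin_prod (2 ^ n)) (2 ^ n + r - s)"
    (is "_ dvd _ * ?a")
proof -
  obtain k where n: "n = Suc k"
    using assms(1) gr0_implies_Suc by blast
  define \<tau> where "\<tau> = (s - r) div 2"
  have \<tau>: "s = r + 2 * \<tau>" "0 < \<tau>" "\<tau> < 2 ^ k"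
    using assms(3-6) n unfolding \<tau>_def by (auto elim!: evenE)
  have "2 ^ n + r - s = 2 * (2 ^ k - \<tau>)"
    using \<tau> n by simp
  then have "v2 ?a = k - v2 (int \<tau>)"
    using v2_coeff_odd_lin_prod_even[of "2 ^ k - \<tau>" k] v2_two_power_diff[of \<tau> k] \<tau> n by simp
  moreover have "v2 (esym n r) + 2 \<le> n + v2 (esym n s)"
    using assms by (simp add: esym_even_gap_def)
  moreover have "v2 (int \<tau>) < \<tau>"
    using \<tau>(2) by (rule v2_less_self)
  ultimately have "r + v2 (esym n r) + 1 \<le> s + v2 (esym n s) + v2 ?a"
    using \<tau> n by linarith
  moreover have "2 ^ (s + v2 (esym n s) + v2 ?a) dvd 2 ^ s * esym n s * ?a"
    by (simp add: power_add mult_dvd_mono multiplicity_dvd)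
  ultimately show ?thesis
    by (rule power_le_dvd[rotated])
qed

lemma esym_upper_half_term_dvd:
  assumes "0 < n" "esym_even_gap n" "esym_odd_succ_eq n" "even r" "r < 2 ^ n" "s \<noteq> r"
  shows "2 ^ (r + v2 (esym n r) + 1) dvd 2 ^ s * esym n s * coeff (odd_lin_prod (2 ^ n)) (2 ^ n + r - s)"
proof -
  consider "s < r" | "2 ^ n \<le> s" | "r < s" "s < 2 ^ n" "odd s" | "r < s" "s < 2 ^ n" "even s"
    using assms(6) by fastforce
  then show ?thesis
  proof cases
    case 1
    then show ?thesis by (simp add: coeff_odd_lin_prod_eq_0)
  next
    case 2
    then show ?thesis by (simp add: esym_eq_0)
  next
    case 3
    then have "r + v2 (esym n r) + 1 \<le> s + v2 (esym n s)"
      using v2_esym_le_odd[OF assms(1-4)] by fastforce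
    moreover have "2 ^ (s + v2 (esym n s)) dvd 2 ^ s * esym n s"
      by (simp add: power_add multiplicity_dvd)
    ultimately show ?thesis
      by (rule dvd_mult2[OF power_le_dvd[rotated]])
  next
    case 4
    then show ?thesis
      using assms by (intro esym_upper_half_even_term_dvd) auto
  qed
qed

text \<open>In the convolution for \<open>esym (Suc n) (2\<^sup>n + r)\<close> the term \<open>s = r\<close>, which meets the odd
  leading coefficient of \<open>odd_lin_prod\<close>, strictly dominates all others.\<close>

lemma v2_esym_upper_half:
  assumes "0 < n" "esym_even_gap n" "esym_odd_succ_eq n" "even r" "r < 2 ^ n"
  shows "v2 (esym (Suc n) (2 ^ n + r)) = r + v2 (esym n r)"
proof -
  define T where "T s = 2 ^ s * esym n s * coeff (odd_lin_prod (2 ^ n)) (2 ^ n + r - s)" for s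
  have top: "odd (coeff (odd_lin_prod (2 ^ n)) (2 ^ n))" "esym n r \<noteq> 0"
    using odd_coeff_odd_lin_prod_top esym_nonzero assms(5) by blast+
  moreover from top have "coeff (odd_lin_prod (2 ^ n)) (2 ^ n) \<noteq> 0"
    by auto
  ultimately have "T r \<noteq> 0" "v2 (T r) = r + v2 (esym n r)"
    by (simp_all add: T_def v2_mult v2_odd)
  moreover have "esym (Suc n) (2 ^ n + r) = (\<Sum>s\<le>2 ^ n + r. T s)"
    by (simp add: esym_Suc T_def)
  moreover have "2 ^ Suc (v2 (T r)) dvd T s" if "s \<noteq> r" for s
    using esym_upper_half_term_dvd[OF assms that] \<open>v2 (T r) = r + v2 (esym n r)\<close> by (simp add: T_def)
  ultimately show ?thesis
    using multiplicity_sum_dominant[of "{..2 ^ n + r}" r T 2] by simp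
qed

lemma increment_bound_telescope:
  fixes f :: "nat \<Rightarrow> nat"
  assumes "\<And>i. t < i \<Longrightarrow> i \<le> j \<Longrightarrow> f i < n + f (i - 1)" "t < j"
  shows "f j + 1 \<le> (j - t) * n + f t"
  using assms
proof (induction j)
  case (Suc j)
  have "f (Suc j) < n + f j"
    using Suc.prems(1)[of "Suc j"] Suc.prems(2) by simp
  moreover have "f j + 1 \<le> (j - t) * n + f t" if "t < j"
    using Suc that by simp
  moreover have "Suc j - t = Suc (j - t)" if "t \<le> j"
    using that by simp
  ultimately show ?case
    using Suc.prems(2) by (cases "t = j") auto
qed simp

lemma esym_reflection_term_dvd:
  assumes "t < r" and bound: "\<And>i. t < i \<Longrightarrow> i \<le> r \<Longrightarrow> v2 (esym n i) < n + v2 (esym n (i - 1))"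
  shows "2 ^ (n + v2 (esym n r) + 1) dvd esym n t * c * (- (2 ^ n)) ^ (Suc r - t)"
proof -
  have "v2 (esym n r) + 1 \<le> (r - t) * n + v2 (esym n t)"
    using assms by (intro increment_bound_telescope) auto
  then have "n + v2 (esym n r) + 1 \<le> v2 (esym n t) + n * (Suc r - t)"
    using assms(1) by (simp add: Suc_diff_le algebra_simps)
  moreover have "(- (2 ^ n)) ^ (Suc r - t) = (-1) ^ (Suc r - t) * (2 :: int) ^ (n * (Suc r - t))"
    unfolding power_minus[of "2 ^ n"] by (simp add: power_mult)
  then have "2 ^ (v2 (esym n t) + n * (Suc r - t)) dvd esym n t * c * (- (2 ^ n)) ^ (Suc r - t)"
    unfolding power_add by (simp add: mult_dvd_mono dvd_mult2 multiplicity_dvd)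
  ultimately show ?thesis
    by (rule power_le_dvd[rotated])
qed

lemma v2_esym_odd_succ:
  assumes "0 < n" "odd r" "r < 2 ^ n"
    and bound: "\<And>i. 0 < i \<Longrightarrow> i < r \<Longrightarrow> v2 (esym n i) < n + v2 (esym n (i - 1))"
  shows "v2 (esym n r) + 1 = n + v2 (esym n (r - 1))"
proof -
  obtain r' where r': "r = Suc r'" "even r'"
    using assms(2) by (metis even_Suc oddE odd_Suc_minus_one)
  define N :: nat where "N = 2 ^ n"
  define S where "S = (\<Sum>t<r'. esym n t * int (N - t choose (Suc r' - t)) * (- int N) ^ (Suc r' - t))"
  define X where "X = int N * (int N - int r' - 1) * esym n r'"
  have "2 * esym n r = X + - S"
    using stirling_poly_reflection_even[of r' N] r' assms(3) by (simp add: esym_def X_def S_def N_def)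
  have odd: "odd (int N - int r' - 1)"
    using assms(1) r'(2) by (simp add: N_def)
  have "odd x \<Longrightarrow> x \<noteq> 0" for x :: int
    by auto
  then have "int N - int r' - 1 \<noteq> 0"
    using odd by blast
  moreover have "esym n r' \<noteq> 0"
    using r' assms(3) by (simp add: esym_nonzero)
  ultimately have "X \<noteq> 0" "v2 X = n + v2 (esym n r')"
    using v2_odd[OF odd] by (simp_all add: X_def N_def v2_mult)
  moreover have "2 ^ Suc (v2 X) dvd - S"
    unfolding S_def dvd_minus_iff
  proof (intro dvd_sum)
    fix t assume "t \<in> {..<r'}"
    then show "2 ^ Suc (v2 X) dvd esym n t * int (N - t choose (Suc r' - t)) * (- int N) ^ (Suc r' - t)"
      using esym_reflection_term_dvd[of t r' n] bound r' \<open>v2 X = n + v2 (esym n r')\<close> by (simp add: N_def)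
  qed
  ultimately have "v2 (2 * esym n r) = v2 X"
    using multiplicity_add_dvd[of X 2 "- S"] \<open>2 * esym n r = X + - S\<close> by simp
  then show ?thesis
    using esym_nonzero[OF assms(3)] \<open>v2 X = n + v2 (esym n r')\<close> r' by (simp add: v2_mult)
qed

lemma esym_even_gap_Suc:
  assumes "0 < n" "esym_even_gap n" "esym_odd_succ_eq n"
  shows "esym_even_gap (Suc n)"
  unfolding esym_even_gap_def
proof (intro allI impI)
  fix r s :: nat
  assume rs: "even r" "even s" "r < s" "s < 2 ^ Suc n"
  show "v2 (esym (Suc n) r) + 2 \<le> Suc n + v2 (esym (Suc n) s)"
  proof (cases "r \<le> 2 ^ n")
    case True
    then show ?thesis
      using v2_esym_lower_half_less[OF assms(1) rs(1)] by simp
  next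
    case False
    define r' s' where "r' = r - 2 ^ n" and "s' = s - 2 ^ n"
    have "r = 2 ^ n + r'" "s = 2 ^ n + s'" "r' < s'" "s' < 2 ^ n" "even r'" "even s'"
      using False rs assms(1) by (auto simp: r'_def s'_def)
    moreover have "v2 (esym n r') + 2 \<le> n + v2 (esym n s')"
      using assms(2) calculation by (simp add: esym_even_gap_def)
    ultimately show ?thesis
      using v2_esym_upper_half[OF assms] by simp
  qed
qed

lemma v2_esym_succ_bound_even:
  assumes "0 < n" "esym_even_gap n" "esym_odd_succ_eq n" "esym_succ_bound n" "even r" "0 < r" "r < 2 ^ Suc n"
    and odd_prev: "2 ^ n < r \<Longrightarrow> v2 (esym (Suc n) (r - 1)) + 1 = Suc n + v2 (esym (Suc n) (r - 2))"
  shows "v2 (esym (Suc n) r) < Suc n + v2 (esym (Suc n) (r - 1))"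
proof (cases "r \<le> 2 ^ n")
  case True
  then show ?thesis
    using v2_esym_lower_half_less[OF assms(1,5)] by simp
next
  case False
  define r' where "r' = r - 2 ^ n"
  have "r = 2 ^ n + r'" "0 < r'" "r' < 2 ^ n" "even r'"
    using False assms(1,5,7) by (auto simp: r'_def)
  then have r': "r = 2 ^ n + r'" "even r'" "2 \<le> r'" "r' < 2 ^ n"
    by presburger+
  have "r - 2 = 2 ^ n + (r' - 2)" "even (r' - 2)" "r' - 2 < 2 ^ n"
    using r' by auto
  then have "v2 (esym (Suc n) (r - 2)) = (r' - 2) + v2 (esym n (r' - 2))"
    using v2_esym_upper_half[OF assms(1-3)] by simp
  moreover have "v2 (esym (Suc n) r) = r' + v2 (esym n r')"
    using v2_esym_upper_half[OF assms(1-3)] r' by simp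
  moreover have "v2 (esym n r') < n + v2 (esym n (r' - 1))"
    using assms(4) r' by (simp add: esym_succ_bound_def)
  moreover have "v2 (esym n (r' - 1)) + 1 = n + v2 (esym n (r' - 2))"
  proof -
    have "odd (r' - 1)" "r' - 1 < 2 ^ n" "r' - 1 - 1 = r' - 2"
      using r' by presburger+
    then show ?thesis
      using assms(3) unfolding esym_odd_succ_eq_def by metis
  qed
  ultimately show ?thesis
    using odd_prev False r'(3) by linarith
qed

lemma esym_succ_bound_Suc:
  assumes "0 < n" "esym_even_gap n" "esym_odd_succ_eq n" "esym_succ_bound n"
  shows "esym_succ_bound (Suc n)"
proof -
  have "0 < r \<longrightarrow> r < 2 ^ Suc n \<longrightarrow> v2 (esym (Suc n) r) < Suc n + v2 (esym (Suc n) (r - 1))" for r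
  proof (induction r rule: less_induct)
    case (less r)
    have bound: "v2 (esym (Suc n) i) < Suc n + v2 (esym (Suc n) (i - 1))" if "0 < i" "i < r" "r < 2 ^ Suc n" for i
      using less.IH that by simp
    show ?case
    proof (intro impI)
      assume r: "0 < r" "r < 2 ^ Suc n"
      show "v2 (esym (Suc n) r) < Suc n + v2 (esym (Suc n) (r - 1))"
      proof (cases "even r")
        case True
        have "v2 (esym (Suc n) (r - 1)) + 1 = Suc n + v2 (esym (Suc n) (r - 2))" if "2 ^ n < r"
        proof -
          have "v2 (esym (Suc n) (r - 1)) + 1 = Suc n + v2 (esym (Suc n) (r - 1 - 1))"
            using True r that by (intro v2_esym_odd_succ bound) auto
          then show ?thesis
            by (simp add: numeral_2_eq_2)
        qed
        then show ?thesis
          by (rule v2_esym_succ_bound_even[OF assms True r])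
      next
        case False
        then show ?thesis
          using v2_esym_odd_succ[of "Suc n" r] bound r by fastforce
      qed
    qed
  qed
  then show ?thesis
    by (simp add: esym_succ_bound_def)
qed

lemma esym_odd_succ_eq_of_succ_bound:
  assumes "0 < n" "esym_succ_bound n"
  shows "esym_odd_succ_eq n"
  unfolding esym_odd_succ_eq_def
proof (intro allI impI)
  fix r :: nat
  assume "odd r" "r < 2 ^ n"
  then show "v2 (esym n r) + 1 = n + v2 (esym n (r - 1))"
    using assms by (intro v2_esym_odd_succ) (auto simp: esym_succ_bound_def)
qed

lemma esym_even_gap_succ_bound: "0 < n \<Longrightarrow> esym_even_gap n \<and> esym_succ_bound n"
proof (induction n rule: nat_induct_non_zero)
  case 1
  have "esym_succ_bound 1"
    unfolding esym_succ_bound_def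
  proof (intro allI impI)
    fix r :: nat
    assume "0 < r" "r < 2 ^ 1"
    then have "r = 1"
      by simp
    then show "v2 (esym 1 r) < 1 + v2 (esym 1 (r - 1))"
      by (simp add: esym_def numeral_2_eq_2 lin_prod_Suc)
  qed
  moreover have "esym_even_gap 1"
    by (auto simp: esym_even_gap_def)
  ultimately show ?case
    by simp
next
  case (Suc n)
  then have "esym_odd_succ_eq n"
    by (simp add: esym_odd_succ_eq_of_succ_bound)
  with Suc show ?case
    using esym_even_gap_Suc esym_succ_bound_Suc by blast
qed

theorem theorem1p2:
  fixes n k :: nat
  assumes "n > 0" and "k > 0" and "k \<le> 2 ^ n"
  shows "multiplicity (2::nat) (stirling (2 ^ n + 1) (k + 1)) = multiplicity (2::nat) (stirling (2 ^ n) k)"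
proof (cases "k = 2 ^ n")
  case False
  define r where "r = 2 ^ n - k"
  have r: "0 < r" "r < 2 ^ n" "2 ^ n - (r - 1) = k + 1" "2 ^ n - r = k"
    using assms False by (auto simp: r_def)
  have "int (stirling (2 ^ n + 1) (k + 1)) = esym n r + 2 ^ n * esym n (r - 1)"
    using r by (simp add: esym_eq_stirling)
  moreover have "v2 (esym n r) < v2 (2 ^ n * esym n (r - 1))"
    using esym_even_gap_succ_bound[OF assms(1)] r esym_nonzero[of "r - 1" n] by (simp add: esym_succ_bound_def v2_mult)
  ultimately have "v2 (int (stirling (2 ^ n + 1) (k + 1))) = v2 (esym n r)"
    using esym_nonzero[of r n] esym_nonzero[of "r - 1" n] r by (simp add: multiplicity_sum_lt)
  also have "\<dots> = v2 (int (stirling (2 ^ n) k))"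
    using r by (simp add: esym_eq_stirling)
  finally show ?thesis
    by (simp only: v2_of_nat)
qed simp

end
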